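(* There is an absolute constant $c>0$ such that for all natural numbers $1\le d\le n$ there exists a partial concept class $\mathbb{H}_{n,d}\subseteq\{0,1,\star\}^{[n]}$ with $d\le\mathrm{LD}(\mathbb{H}_{n,d})\le d+1$ whose SOA disambiguation $\overline{\mathbb{H}_{n,d}}^{\mathrm{SOA}}$ (with respect to the natural ordering $1,2,\dots,n$ of $[n]$) has $\mathrm{VC}\big(\overline{\mathbb{H}_{n,d}}^{\mathrm{SOA}}\big)\ge c\, d\log(n/d)$.
   Context: A partial concept class on $[n]$ is a set $\mathbb{H}\subseteq\{0,1,\star\}^{[n]}$. VC dimension: the largest size of a set $S\subseteq[n]$ such that every $0/1$ pattern on $S$ is realized by some $h\in\mathbb{H}$. Littlestone dimension $\mathrm{LD}(\mathbb{H})$: the largest $d$ such that there is a full binary tree of height $d$, internal nodes $v\in\bigcup_{k<d}\{0,1\}^k$ labelled by points $x_v$, such that for every $y\in\{0,1\}^d$ some $h\in\mathbb{H}$ has $h(x_{y_1\cdots y_{i-1}})=y_i$ for all $i\in[d]$; by convention $\mathrm{LD}(\emptyset)=-1$. For a class $\mathbb{H}$ and $\vec b\in\{0,1,\star\}^k$ let $\mathbb{H}|_{\vec b}=\{h\in\mathbb{H}: h(i)=b_i \text{ for all } i\in[k]\}$ (with $\mathbb{H}|_{()}=\mathbb{H}$). The SOA disambiguation $\overline{\mathbb{H}}^{\mathrm{SOA}}$ is produced iteratively: for $k=1,2,\dots,n$, given the current class (in which all values at points $1,\dots,k-1$ are already in $\{0,1\}$), for every $\vec b\in\{0,1\}^{k-1}$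 choose $c\in\{0,1\}$ maximizing $\mathrm{LD}(\mathbb{H}|_{\vec b c})$ (ties broken in favour of $c=0$), and redefine $h(k):=c$ for every $h\in\mathbb{H}|_{\vec b\star}$. The resulting total class is $\overline{\mathbb{H}}^{\mathrm{SOA}}$. *)

theory Defs
  imports Complex_Main
begin

text \<open>A partial concept on [n] = {1..n} is a function nat => bool option,
  where None encodes the undefined value (star), Some False = 0, Some True = 1,
  and which is None outside {1..n}.\<close>

type_synonym pconcept = "nat \<Rightarrow> bool option"

definition partial_concepts :: "nat \<Rightarrow> pconcept set" where
  "partial_concepts n = {h. \<forall>x. x \<notin> {1..n} \<longrightarrow> h x = None}"

definition shatters :: "pconcept set \<Rightarrow> nat set \<Rightarrow> bool" where
  "shatters H S \<longleftrightarrow> (\<forall>f :: nat \<Rightarrow> bool. \<exists>h\<in>H. \<forall>x\<in>S. h x = Some (f x))"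

definition vc_dim :: "pconcept set \<Rightarrow> nat" where
  "vc_dim H = Max {card S | S. finite S \<and> shatters H S}"

text \<open>Mistake tree of height d: node v (a bool list of length < d) is labelled by
  point x v; every branch y of length d is realised by some concept.\<close>
definition ltree :: "pconcept set \<Rightarrow> nat \<Rightarrow> bool" where
  "ltree H d \<longleftrightarrow> (\<exists>x :: bool list \<Rightarrow> nat. \<forall>y :: bool list. length y = d \<longrightarrow>
      (\<exists>h\<in>H. \<forall>i<d. h (x (take i y)) = Some (y ! i)))"

definition ldim :: "pconcept set \<Rightarrow> int" where
  "ldim H = (if H = {} then -1 else int (Max {d. ltree H d}))"

definition restr :: "pconcept set \<Rightarrow> nat \<Rightarrow> pconcept \<Rightarrow> bool \<Rightarrow> pconcept set" where
  "restr H k h c = {g\<in>H. (\<forall>i\<in>{1..<k}. g i = h i) \<and> g k = Some c}"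

text \<open>SOA choice at point k for prefix pattern of h: True (=1) only if strictly better
  (ties broken in favour of 0 = False).\<close>
definition soa_choice :: "pconcept set \<Rightarrow> nat \<Rightarrow> pconcept \<Rightarrow> bool" where
  "soa_choice H k h \<longleftrightarrow> ldim (restr H k h False) < ldim (restr H k h True)"

definition soa_step :: "pconcept set \<Rightarrow> nat \<Rightarrow> pconcept set" where
  "soa_step H k = (\<lambda>h. if h k = None then h(k := Some (soa_choice H k h)) else h) ` H"

fun soa_iter :: "pconcept set \<Rightarrow> nat \<Rightarrow> pconcept set" where
  "soa_iter H 0 = H"
| "soa_iter H (Suc k) = soa_step (soa_iter H k) (Suc k)"

definition soa_disamb :: "nat \<Rightarrow> pconcept set \<Rightarrow> pconcept set" where
  "soa_disamb n H = soa_iter H n"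

end

theory Submission
  imports Defs
begin

text \<open>A concept of the class spells a set \<open>A \<subseteq> {1..m}\<close> with \<open>card A \<le> d\<close> on the first
  \<open>m\<close> points, which already yields a mistake tree of height \<open>d\<close>; beyond \<open>m\<close> it is undefined,
  except possibly for a single 1 at a point of a set \<open>g A\<close>. Every concept has at most \<open>d + 1\<close>
  ones, and along the adversary's branch a concept is forced to take the value 1 at distinct points,
  so the Littlestone dimension is at most \<open>d + 1\<close>. When SOA reaches a point \<open>x > m\<close>, the
  prefix fixes \<open>A\<close> and the only surviving concepts are those with a 1 at \<open>x\<close>, so SOA writes the
  indicator of \<open>g A\<close> onto \<open>{m<..n}\<close>. If \<open>g\<close> maps the \<open>A\<close>'s onto all subsets of a
  block of \<open>t\<close> points, that block is shattered; and \<open>log (m choose d) \<ge> d log (m / d)\<close> allows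
  \<open>t\<close> of order \<open>d log (n / d)\<close>.\<close>

lemma ldim_empty: "ldim {} = -1"
  by (simp add: ldim_def)

lemma ldim_nonneg: "H \<noteq> {} \<Longrightarrow> ldim H \<ge> 0"
  by (simp add: ldim_def)

lemma ldim_bounds:
  assumes tree: "ltree H d" and height: "\<And>k. ltree H k \<Longrightarrow> k \<le> r"
  shows "int d \<le> ldim H" and "ldim H \<le> int r"
proof -
  have "H \<noteq> {}"
    using tree unfolding ltree_def by (auto dest!: spec[of _ "replicate d False"])
  moreover have fin: "finite {k. ltree H k}"
    by (rule finite_subset[of _ "{..r}"]) (use height in auto)
  then have "d \<le> Max {k. ltree H k}"
    by (rule Max_ge) (simp add: tree)
  moreover have "Max {k. ltree H k} \<le> r"
    using fin tree height by (subst Max_le_iff) auto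
  ultimately show "int d \<le> ldim H" "ldim H \<le> int r"
    unfolding ldim_def by simp_all
qed

lemma shatters_subset_domain:
  assumes "H \<subseteq> partial_concepts n" and "shatters H S"
  shows "S \<subseteq> {1..n}"
proof
  fix x assume "x \<in> S"
  obtain h where "h \<in> H" and "\<forall>x\<in>S. h x = Some True"
    using assms(2) unfolding shatters_def by (elim allE[of _ "\<lambda>_. True"]) blast
  then have "h x = Some True" and "h \<in> partial_concepts n"
    using \<open>x \<in> S\<close> assms(1) by blast+
  then show "x \<in> {1..n}"
    unfolding partial_concepts_def by auto
qed

lemma card_le_vc_dim:
  assumes "H \<subseteq> partial_concepts n" and "shatters H S"
  shows "card S \<le> vc_dim H"
proof -
  have "{card S | S. finite S \<and> shatters H S} \<subseteq> card ` Pow {1..n}"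
    using shatters_subset_domain[OF assms(1)] by blast
  then have "finite {card S | S. finite S \<and> shatters H S}"
    by (rule finite_subset) simp
  moreover have "finite S"
    using shatters_subset_domain[OF assms] finite_subset by blast
  then have "card S \<in> {card S | S. finite S \<and> shatters H S}"
    using assms(2) by blast
  ultimately show ?thesis
    unfolding vc_dim_def by (rule Max_ge)
qed

lemma soa_iter_partial_concepts:
  assumes "H \<subseteq> partial_concepts n" and "k \<le> n"
  shows "soa_iter H k \<subseteq> partial_concepts n"
  using assms(2)
proof (induction k)
  case 0
  then show ?case
    using assms(1) by simp
next
  case (Suc k)
  then have "soa_iter H k \<subseteq> partial_concepts n"
    by simp
  moreover have "Suc k \<in> {1..n}"
    using Suc.prems by simp
  ultimately show ?case
    unfolding soa_iter.simps soa_step_def partial_concepts_def by auto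
qed

lemma soa_disamb_partial_concepts:
  "H \<subseteq> partial_concepts n \<Longrightarrow> soa_disamb n H \<subseteq> partial_concepts n"
  unfolding soa_disamb_def by (simp add: soa_iter_partial_concepts)

text \<open>The adversary's branch through a mistake tree labelled by \<open>x\<close>: answer 1 unless the queried
  point was already answered 1 further up. A consistent concept can never be told 0 at such a
  point, so all answers are 1 and the queried points are distinct.\<close>

definition greedy_answer :: "(bool list \<Rightarrow> nat) \<Rightarrow> bool list \<Rightarrow> bool" where
  "greedy_answer x p \<longleftrightarrow> x p \<notin> {x (take j p) | j. j < length p \<and> p ! j}"

fun greedy_path :: "(bool list \<Rightarrow> nat) \<Rightarrow> nat \<Rightarrow> bool list" where
  "greedy_path x 0 = []"
| "greedy_path x (Suc i) = greedy_path x i @ [greedy_answer x (greedy_path x i)]"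

lemma length_greedy_path [simp]: "length (greedy_path x i) = i"
  by (induction i) auto

lemma take_greedy_path: "j \<le> i \<Longrightarrow> take j (greedy_path x i) = greedy_path x j"
  by (induction i) (auto simp: le_Suc_eq)

lemma nth_greedy_path:
  assumes "j < i"
  shows "greedy_path x i ! j = greedy_answer x (greedy_path x j)"
proof -
  have "greedy_path x i ! j = take (Suc j) (greedy_path x i) ! j"
    by simp
  also have "\<dots> = greedy_path x (Suc j) ! j"
    using assms by (simp only: take_greedy_path Suc_leI)
  finally show ?thesis by (simp add: nth_append)
qed

lemma greedy_answer_greedy_path:
  "greedy_answer x (greedy_path x i) \<longleftrightarrow>
     x (greedy_path x i) \<notin> {x (greedy_path x l) | l. l < i \<and> greedy_answer x (greedy_path x l)}"
proof -
  have "{x (take l (greedy_path x i)) | l. l < length (greedy_path x i) \<and> greedy_path x i ! l}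
      = {x (greedy_path x l) | l. l < i \<and> greedy_answer x (greedy_path x l)}"
    (is "?L = ?R")
  proof (intro set_eqI iffI)
    fix v assume "v \<in> ?L"
    then show "v \<in> ?R"
      by (auto simp: take_greedy_path nth_greedy_path)
  next
    fix v assume "v \<in> ?R"
    then obtain l where "l < i" "greedy_answer x (greedy_path x l)" "v = x (greedy_path x l)"
      by blast
    then show "v \<in> ?L"
      by (auto simp: take_greedy_path nth_greedy_path intro!: exI[of _ l])
  qed
  then show ?thesis
    unfolding greedy_answer_def[of x "greedy_path x i"] by simp
qed

lemma ltree_height_le_card_ones:
  assumes tree: "ltree H k"
    and ones: "\<And>h. h \<in> H \<Longrightarrow> finite {x. h x = Some True} \<and> card {x. h x = Some True} \<le> r"
  shows "k \<le> r"
proof -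
  obtain x where "\<forall>y :: bool list. length y = k \<longrightarrow>
      (\<exists>h\<in>H. \<forall>i<k. h (x (take i y)) = Some (y ! i))"
    using tree unfolding ltree_def by blast
  then obtain h where "h \<in> H"
    and "\<forall>i<k. h (x (take i (greedy_path x k))) = Some (greedy_path x k ! i)"
    by (meson length_greedy_path)
  define q where "q i = x (greedy_path x i)" for i
  define a where "a i = greedy_answer x (greedy_path x i)" for i
  have h_q: "h (q i) = Some (a i)" if "i < k" for i
    using \<open>\<forall>i<k. _\<close> that
    by (simp add: q_def a_def take_greedy_path nth_greedy_path)
  have a_iff: "a i \<longleftrightarrow> q i \<notin> {q l | l. l < i \<and> a l}" for i
    unfolding q_def a_def by (rule greedy_answer_greedy_path)
  have all_ones: "a i" if "i < k" for i
  proof (rule ccontr)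
    assume "\<not> a i"
    then obtain l where "l < i" "a l" "q l = q i"
      using a_iff[of i] by auto
    then show False
      using h_q[of l] h_q[of i] \<open>i < k\<close> \<open>\<not> a i\<close> by auto
  qed
  have distinct: "q i \<noteq> q j" if "i < j" and "j < k" for i j
    using a_iff[of j] all_ones that by auto
  have "inj_on q {..<k}"
    by (rule inj_onI) (metis distinct lessThan_iff linorder_neqE_nat)
  then have "k = card (q ` {..<k})"
    by (simp add: card_image)
  also have "\<dots> \<le> card {x. h x = Some True}"
    using h_q all_ones ones[OF \<open>h \<in> H\<close>] by (intro card_mono) auto
  also have "\<dots> \<le> r"
    using ones[OF \<open>h \<in> H\<close>] by blast
  finally show ?thesis .
qed

definition small_subsets :: "nat \<Rightarrow> nat \<Rightarrow> nat set set" where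
  "small_subsets m d = {A. A \<subseteq> {1..m} \<and> card A \<le> d}"

lemma finite_small_subsets: "finite (small_subsets m d)"
  unfolding small_subsets_def by (rule finite_subset[of _ "Pow {1..m}"]) auto

text \<open>The index \<open>(A, None)\<close> stands for the concept spelling \<open>A\<close>, the index \<open>(A, Some s)\<close> for
  the one with an extra 1 at \<open>s \<in> g A\<close>. The parameter \<open>k\<close> records how far SOA has got:
  \<open>coded_concept m g k\<close> is the concept after \<open>k\<close> disambiguation steps.\<close>

definition coded_index :: "nat \<Rightarrow> nat \<Rightarrow> (nat set \<Rightarrow> nat set) \<Rightarrow> (nat set \<times> nat option) set" where
  "coded_index m d g = {(A, s). A \<in> small_subsets m d \<and> (\<forall>x. s = Some x \<longrightarrow> x \<in> g A)}"

definition coded_concept ::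
    "nat \<Rightarrow> (nat set \<Rightarrow> nat set) \<Rightarrow> nat \<Rightarrow> nat set \<times> nat option \<Rightarrow> pconcept" where
  "coded_concept m g k As = (\<lambda>x. if x \<in> {1..m} then Some (x \<in> fst As)
      else if 1 \<le> x \<and> x \<le> k then Some (x \<in> g (fst As))
      else if snd As = Some x then Some True else None)"

lemma coded_concept_after_code:
  "m \<le> k \<Longrightarrow> coded_concept m g k As (Suc k) = (if snd As = Some (Suc k) then Some True else None)"
  by (simp add: coded_concept_def)

lemma coded_concept_prefix_eq:
  assumes "m \<le> k" and "As \<in> coded_index m d g" and "Bs \<in> coded_index m d g"
    and "\<forall>i\<in>{1..<Suc k}. coded_concept m g k Bs i = coded_concept m g k As i"
  shows "fst Bs = fst As"
proof -
  have "fst As \<subseteq> {1..m}" "fst Bs \<subseteq> {1..m}"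
    using assms(2,3) by (auto simp: coded_index_def small_subsets_def)
  moreover have "x \<in> fst Bs \<longleftrightarrow> x \<in> fst As" if "x \<in> {1..m}" for x
    using assms(1,4) that by (force simp: coded_concept_def)
  ultimately show ?thesis by blast
qed

text \<open>Past the code, the prefix determines \<open>A\<close>; answering 0 is realised by no concept, and
  answering 1 exactly when the point lies in \<open>g A\<close>.\<close>

lemma soa_choice_coded:
  assumes "m \<le> k" and As: "As \<in> coded_index m d g" and "snd As \<noteq> Some (Suc k)"
  shows "soa_choice (coded_concept m g k ` coded_index m d g) (Suc k) (coded_concept m g k As)
           \<longleftrightarrow> Suc k \<in> g (fst As)"
proof -
  let ?R = "restr (coded_concept m g k ` coded_index m d g) (Suc k) (coded_concept m g k As)"
  have R0: "?R False = {}"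
    unfolding restr_def using coded_concept_after_code[OF \<open>m \<le> k\<close>]
    by (auto split: if_splits)
  show ?thesis
  proof (cases "Suc k \<in> g (fst As)")
    case True
    let ?Bs = "(fst As, Some (Suc k))"
    have "?Bs \<in> coded_index m d g"
      using As True by (auto simp: coded_index_def)
    moreover have "\<forall>i\<in>{1..<Suc k}. coded_concept m g k ?Bs i = coded_concept m g k As i"
      by (auto simp: coded_concept_def)
    ultimately have "coded_concept m g k ?Bs \<in> ?R True"
      unfolding restr_def using coded_concept_after_code[OF \<open>m \<le> k\<close>, of g ?Bs] by auto
    then have "ldim (?R True) \<ge> 0"
      using ldim_nonneg by blast
    then show ?thesis
      using True R0 by (simp add: soa_choice_def ldim_empty)
  next
    case False
    have "?R True = {}"
    proof (rule ccontr)
      assume "?R True \<noteq> {}"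
      then obtain Bs where Bs: "Bs \<in> coded_index m d g"
        and prefix: "\<forall>i\<in>{1..<Suc k}. coded_concept m g k Bs i = coded_concept m g k As i"
        and "coded_concept m g k Bs (Suc k) = Some True"
        unfolding restr_def by auto
      then have "Suc k \<in> g (fst Bs)"
        using coded_concept_after_code[OF \<open>m \<le> k\<close>, of g Bs]
        by (auto simp: coded_index_def split: if_splits)
      then show False
        using coded_concept_prefix_eq[OF \<open>m \<le> k\<close> As Bs prefix] False by simp
    qed
    then show ?thesis
      using False R0 by (simp add: soa_choice_def)
  qed
qed

lemma soa_step_coded_concept:
  assumes As: "As \<in> coded_index m d g"
  shows "(if coded_concept m g k As (Suc k) = None
          then (coded_concept m g k As)(Suc k :=
                  Some (soa_choice (coded_concept m g k ` coded_index m d g) (Suc k) (coded_concept m g k As)))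
          else coded_concept m g k As)
       = coded_concept m g (Suc k) As"
proof (cases "m \<le> k \<and> snd As \<noteq> Some (Suc k)")
  case True
  then show ?thesis
    using soa_choice_coded[OF _ As] by (auto simp: coded_concept_def fun_eq_iff)
next
  case False
  then have "Suc k \<le> m \<or> Suc k \<in> g (fst As) \<and> snd As = Some (Suc k)"
    using As by (auto simp: coded_index_def)
  then show ?thesis
    by (auto simp: coded_concept_def fun_eq_iff)
qed

lemma soa_iter_coded:
  "soa_iter (coded_concept m g 0 ` coded_index m d g) k = coded_concept m g k ` coded_index m d g"
proof (induction k)
  case (Suc k)
  have "soa_step (coded_concept m g k ` coded_index m d g) (Suc k)
      = coded_concept m g (Suc k) ` coded_index m d g"
    unfolding soa_step_def image_image by (intro image_cong refl soa_step_coded_concept)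
  then show ?case
    using Suc.IH by simp
qed simp

lemma coded_class_partial_concepts:
  assumes "m \<le> n" and "\<And>A. g A \<subseteq> {1..n}"
  shows "coded_concept m g 0 ` coded_index m d g \<subseteq> partial_concepts n"
  using assms by (fastforce simp: coded_index_def coded_concept_def partial_concepts_def)

lemma card_ones_coded_concept:
  assumes "As \<in> coded_index m d g"
  shows "finite {x. coded_concept m g 0 As x = Some True}
    \<and> card {x. coded_concept m g 0 As x = Some True} \<le> d + 1"
proof -
  have A: "fst As \<subseteq> {1..m}" "card (fst As) \<le> d"
    using assms by (auto simp: coded_index_def small_subsets_def)
  then have "finite (fst As)"
    using finite_subset by blast
  moreover have "{x. coded_concept m g 0 As x = Some True} \<subseteq> set_option (snd As) \<union> fst As"
    by (auto simp: coded_concept_def split: if_splits)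
  moreover have "card (set_option (snd As) \<union> fst As) \<le> d + 1"
    using A(2) card_Un_le[of "set_option (snd As)" "fst As"]
    by (cases "snd As") auto
  moreover have "finite (set_option (snd As) \<union> fst As)"
    using \<open>finite (fst As)\<close> by (cases "snd As") auto
  ultimately show ?thesis
    by (meson card_mono finite_subset le_trans)
qed

lemma ltree_coded_class:
  assumes "d \<le> m"
  shows "ltree (coded_concept m g 0 ` coded_index m d g) d"
  unfolding ltree_def
proof (intro exI[of _ "\<lambda>v. Suc (length v)"] allI impI)
  fix y :: "bool list" assume "length y = d"
  define A where "A = {j \<in> {1..d}. y ! (j - 1)}"
  have "A \<subseteq> {1..d}"
    unfolding A_def by auto
  then have "(A, None) \<in> coded_index m d g"
    using assms card_mono[of "{1..d}" A]
    by (auto simp: coded_index_def small_subsets_def)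
  moreover have "\<forall>i<d. coded_concept m g 0 (A, None) (Suc (length (take i y))) = Some (y ! i)"
    using \<open>length y = d\<close> assms by (auto simp: coded_concept_def A_def)
  ultimately show "\<exists>h\<in>coded_concept m g 0 ` coded_index m d g.
                     \<forall>i<d. h (Suc (length (take i y))) = Some (y ! i)"
    by blast
qed

lemma shatters_coded_class:
  assumes "S \<inter> {1..m} = {}" and "S \<subseteq> {1..n}"
    and decode: "\<And>B. B \<subseteq> S \<Longrightarrow> \<exists>A\<in>small_subsets m d. g A = B"
  shows "shatters (coded_concept m g n ` coded_index m d g) S"
  unfolding shatters_def
proof
  fix f :: "nat \<Rightarrow> bool"
  obtain A where "A \<in> small_subsets m d" and A: "g A = {x \<in> S. f x}"
    using decode[of "{x \<in> S. f x}"] by blast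
  then have "(A, None) \<in> coded_index m d g"
    by (simp add: coded_index_def)
  moreover have "\<forall>x\<in>S. coded_concept m g n (A, None) x = Some (f x)"
    using assms(1,2) A by (auto simp: coded_concept_def)
  ultimately show "\<exists>h\<in>coded_concept m g n ` coded_index m d g. \<forall>x\<in>S. h x = Some (f x)"
    by blast
qed

lemma exists_decoder:
  assumes "finite S" and "2 ^ card S \<le> card (small_subsets m d)"
  obtains g where "\<And>A. g A \<subseteq> S" and "\<And>B. B \<subseteq> S \<Longrightarrow> \<exists>A\<in>small_subsets m d. g A = B"
proof -
  obtain f where f: "f ` Pow S \<subseteq> small_subsets m d" "inj_on f (Pow S)"
    using card_le_inj[of "Pow S" "small_subsets m d"] assms finite_small_subsets
    by (auto simp: card_Pow)
  define g where "g A = (if A \<in> f ` Pow S then inv_into (Pow S) f A else {})" for A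
  have "g A \<subseteq> S" for A
    unfolding g_def using inv_into_into[of _ f "Pow S"] by auto
  moreover have "\<exists>A\<in>small_subsets m d. g A = B" if "B \<subseteq> S" for B
    using that f by (intro bexI[of _ "f B"]) (auto simp: g_def)
  ultimately show thesis
    using that by blast
qed

theorem exists_class_soa_vc_dim_ge:
  assumes "m + t \<le> n" and "d \<le> m" and "2 ^ t \<le> card (small_subsets m d)"
  shows "\<exists>H. H \<subseteq> partial_concepts n \<and> int d \<le> ldim H \<and> ldim H \<le> int d + 1
           \<and> t \<le> vc_dim (soa_disamb n H)"
proof -
  define S where "S = {m<..m + t}"
  obtain g where g_range: "\<And>A. g A \<subseteq> S"
    and decode: "\<And>B. B \<subseteq> S \<Longrightarrow> \<exists>A\<in>small_subsets m d. g A = B"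
    using exists_decoder[of S m d] assms(3) by (auto simp: S_def)
  define H where "H = coded_concept m g 0 ` coded_index m d g"
  have S_n: "S \<subseteq> {1..n}"
    using assms(1) by (auto simp: S_def)
  have H_n: "H \<subseteq> partial_concepts n"
    unfolding H_def using assms(1) g_range S_n
    by (intro coded_class_partial_concepts) auto
  have "\<And>h. h \<in> H \<Longrightarrow> finite {x. h x = Some True} \<and> card {x. h x = Some True} \<le> d + 1"
    unfolding H_def using card_ones_coded_concept by blast
  then have height: "k \<le> d + 1" if "ltree H k" for k
    using ltree_height_le_card_ones[OF that] by blast
  have "ltree H d"
    unfolding H_def using assms(2) by (rule ltree_coded_class)
  note ldim_H = ldim_bounds[OF this height]
  have "S \<inter> {1..m} = {}"
    by (auto simp: S_def)
  then have "shatters (coded_concept m g n ` coded_index m d g) S"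
    using S_n decode by (rule shatters_coded_class)
  then have "shatters (soa_disamb n H) S"
    unfolding H_def soa_disamb_def soa_iter_coded .
  then have "card S \<le> vc_dim (soa_disamb n H)"
    by (rule card_le_vc_dim[OF soa_disamb_partial_concepts[OF H_n]])
  moreover have "card S = t"
    by (simp add: S_def)
  ultimately show ?thesis
    using H_n ldim_H by auto
qed

lemma pow2_le_card_small_subsets:
  assumes "t \<le> d" and "t \<le> m"
  shows "2 ^ t \<le> card (small_subsets m d)"
proof -
  have "Pow {1..t} \<subseteq> small_subsets m d"
  proof
    fix A assume "A \<in> Pow {1..t}"
    then have "card A \<le> t"
      using card_mono[of "{1..t}" A] by simp
    with \<open>A \<in> Pow {1..t}\<close> show "A \<in> small_subsets m d"
      using assms by (auto simp: small_subsets_def)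
  qed
  then have "card (Pow {1..t}) \<le> card (small_subsets m d)"
    by (rule card_mono[OF finite_small_subsets])
  then show ?thesis
    by (simp add: card_Pow)
qed

lemma binomial_le_card_small_subsets: "m choose d \<le> card (small_subsets m d)"
proof -
  have "{A. A \<subseteq> {1..m} \<and> card A = d} \<subseteq> small_subsets m d"
    by (auto simp: small_subsets_def)
  then have "card {A. A \<subseteq> {1..m} \<and> card A = d} \<le> card (small_subsets m d)"
    by (rule card_mono[OF finite_small_subsets])
  then show ?thesis
    using n_subsets[of "{1..m}" d] by simp
qed

lemma exists_code_length_small_ratio:
  assumes "1 \<le> d" and "d \<le> n" and "n < 8 * d"
  shows "\<exists>t. t \<le> d \<and> d + t \<le> n \<and> 1/8 * real d * ln (real n / real d) \<le> real t"
proof (intro exI conjI)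
  define t where "t = min d (n - d)"
  show "t \<le> d" "d + t \<le> n"
    using assms by (auto simp: t_def)
  have d_pos: "real d > 0"
    using assms by simp
  have "ln (real n / real d) \<le> real n / real d - 1"
    using assms by (intro ln_le_minus_one) auto
  then have "real d * ln (real n / real d) \<le> real d * (real n / real d - 1)"
    using d_pos by (simp add: mult_left_mono)
  also have "\<dots> = real n - real d"
    using d_pos by (simp add: field_simps)
  finally have "real d * ln (real n / real d) \<le> real n - real d" .
  moreover have "real n - real d < 7 * real d"
    using assms by linarith
  ultimately have "real d * ln (real n / real d) / 8 \<le> min (real d) (real n - real d)"
    using assms(2) d_pos by (intro min.boundedI) linarith+
  also have "\<dots> = real t"
    using assms by (simp add: t_def)
  finally show "1/8 * real d * ln (real n / real d) \<le> real t"
    by simp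
qed

lemma exists_code_length_large_ratio:
  assumes "1 \<le> d" and "8 * d \<le> n"
  shows "\<exists>t. d + t \<le> n \<and> 2 ^ t \<le> (n - t) choose d \<and> 1/8 * real d * ln (real n / real d) \<le> real t"
proof (intro exI conjI)
  define x where "x = real n / (2 * real d)"
  define z where "z = real d * ln x"
  define t where "t = nat \<lfloor>z\<rfloor>"
  have d_pos: "real d > 0"
    using assms by simp
  have x_ge: "x \<ge> 4"
    unfolding x_def using assms d_pos by (simp add: le_divide_eq)
  have "1 \<le> ln (4::real)"
    using exp_le ln_ge_iff by fastforce
  also have "\<dots> \<le> ln x"
    using x_ge by simp
  finally have z_ge: "1 \<le> z"
    unfolding z_def using assms by (metis mult_mono' mult_1 of_nat_1 of_nat_le_iff zero_le_one)
  have "z \<le> real d * (x - 1)"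
    unfolding z_def using x_ge d_pos by (intro mult_left_mono ln_le_minus_one) auto
  also have "\<dots> = real n / 2 - real d"
    unfolding x_def using d_pos by (simp add: field_simps)
  finally have z_le: "z \<le> real n / 2 - real d" .
  have "real t = of_int \<lfloor>z\<rfloor>" and "1 \<le> t"
    unfolding t_def using z_ge by (simp_all add: le_nat_iff le_floor_iff)
  then have t_le: "real t \<le> z" and t_ge: "z / 2 \<le> real t"
    using of_int_floor_le[of z] real_of_int_floor_gt_diff_one[of z] by linarith+
  then have "real t + real d \<le> real n / 2"
    using z_le by linarith
  then show "d + t \<le> n"
    by linarith
  then have m_ge: "real n / 2 + real d \<le> real (n - t)"
    using \<open>real t + real d \<le> real n / 2\<close> by simp
  have "x \<le> real (n - t) / real d"
    unfolding x_def using m_ge d_pos by (simp add: field_simps)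
  then have "x ^ d \<le> (real (n - t) / real d) ^ d"
    by (rule power_mono) (use x_ge in linarith)
  also have "\<dots> \<le> real (n - t choose d)"
    by (rule binomial_ge_n_over_k_pow_k) (use \<open>d + t \<le> n\<close> in linarith)
  finally have "exp z \<le> real (n - t choose d)"
    unfolding z_def using x_ge by (simp add: exp_of_nat_mult)
  moreover have "(2::real) ^ t \<le> exp 1 ^ t"
    using exp_ge_add_one_self[of 1] by (intro power_mono) auto
  moreover have "exp 1 ^ t \<le> exp z"
    using t_le by (simp add: exp_of_nat_mult[symmetric])
  ultimately have "(2::real) ^ t \<le> real (n - t choose d)"
    by linarith
  then show "2 ^ t \<le> n - t choose d"
    by (metis of_nat_le_iff of_nat_numeral of_nat_power)
  have "real n / real d = 2 * x"
    unfolding x_def using d_pos by simp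
  then have "ln (real n / real d) = ln 2 + ln x"
    using x_ge by (simp add: ln_mult)
  moreover have "ln 2 \<le> ln x"
    using x_ge by simp
  ultimately have "real d * ln (real n / real d) \<le> 2 * z"
    unfolding z_def using d_pos by (simp add: algebra_simps mult_left_mono)
  then show "1/8 * real d * ln (real n / real d) \<le> real t"
    using t_ge z_ge by linarith
qed

lemma exists_code_length:
  assumes "1 \<le> d" and "d \<le> n"
  obtains m t where "m + t \<le> n" and "d \<le> m" and "2 ^ t \<le> card (small_subsets m d)"
    and "1/8 * real d * ln (real n / real d) \<le> real t"
proof (cases "n < 8 * d")
  case True
  then obtain t where "t \<le> d" "d + t \<le> n" "1/8 * real d * ln (real n / real d) \<le> real t"
    using exists_code_length_small_ratio assms by blast
  moreover have "2 ^ t \<le> card (small_subsets (n - t) d)"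
    using \<open>t \<le> d\<close> \<open>d + t \<le> n\<close> by (intro pow2_le_card_small_subsets) linarith+
  ultimately show thesis
    using that[of "n - t" t] by linarith
next
  case False
  then obtain t where "d + t \<le> n" "2 ^ t \<le> n - t choose d"
      "1/8 * real d * ln (real n / real d) \<le> real t"
    using exists_code_length_large_ratio assms by (meson not_less)
  moreover have "2 ^ t \<le> card (small_subsets (n - t) d)"
    using \<open>2 ^ t \<le> n - t choose d\<close> binomial_le_card_small_subsets by (rule order_trans)
  ultimately show thesis
    using that[of "n - t" t] by linarith
qed

theorem theorem1p9:
  shows "\<exists>c::real. c > 0 \<and> (\<forall>n d :: nat. 1 \<le> d \<and> d \<le> n \<longrightarrow>
    (\<exists>H. H \<subseteq> partial_concepts n \<and> int d \<le> ldim H \<and> ldim H \<le> int d + 1 \<and>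
       real (vc_dim (soa_disamb n H)) \<ge> c * real d * ln (real n / real d)))"
proof (intro exI[of _ "1/8"] conjI allI impI)
  fix n d :: nat
  assume "1 \<le> d \<and> d \<le> n"
  then have "1 \<le> d" and "d \<le> n"
    by simp_all
  then obtain m t where "m + t \<le> n" and "d \<le> m" and "2 ^ t \<le> card (small_subsets m d)"
      and t: "1/8 * real d * ln (real n / real d) \<le> real t"
    by (rule exists_code_length)
  then obtain H where H: "H \<subseteq> partial_concepts n" "int d \<le> ldim H" "ldim H \<le> int d + 1"
      and vc: "t \<le> vc_dim (soa_disamb n H)"
    by (blast dest: exists_class_soa_vc_dim_ge)
  from vc have "real t \<le> real (vc_dim (soa_disamb n H))"
    by (rule of_nat_mono)
  with t have "1/8 * real d * ln (real n / real d) \<le> real (vc_dim (soa_disamb n H))"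
    by (rule order_trans)
  with H show "\<exists>H. H \<subseteq> partial_concepts n \<and> int d \<le> ldim H \<and> ldim H \<le> int d + 1 \<and>
       real (vc_dim (soa_disamb n H)) \<ge> 1/8 * real d * ln (real n / real d)"
    by blast
qed simp

end
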